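(* Let $I$ be a BPPS instance with $d$ scenarios and let $\hat I$ be the instance obtained from $I$ by replacing small items as described in the context. Then $\mathrm{OPT}(\hat I)\le(1+2^{d+1}(d+1)\varepsilon)\,\mathrm{OPT}(I)+1$.
   Context: A BPPS instance has $d$ scenarios, items $\mathcal{I}$, each item $i$ with size $s_i$ and type (scenario set) $\mathcal{K}_i\subseteq\{1,\dots,d\}$, and bins of capacity $1$; $S_k=\{i:k\in\mathcal{K}_i\}$. A solution is a partition $\mathcal{B}$ of the items with $\sum_{i\in B\cap S_k}s_i\le1$ for all $B\in\mathcal{B}$ and all $k$, of value $\max_k|\{B\in\mathcal{B}:B\cap S_k\ne\emptyset\}|$; $\mathrm{OPT}$ is the minimum value. $\mathcal{T}$ is the set of all types. Fix $\varepsilon\in(0,1/4]$ with $1/\varepsilon$ an integer. Let $\mathcal{L}=\{i\in\mathcal{I}:s_i\ge\varepsilon^2\}$ and $\mathcal{S}=\mathcal{I}\setminus\mathcal{L}$; for $t\in\mathcal{T}$ let $\mathcal{S}_t$ be the items of $\mathcal{S}$ of type $t$, and let $\hat{\mathcal{S}}_t$ be a set of $\lceil\sum_{i\in\mathcal{S}_t}s_i/(\varepsilon-\varepsilon^2)\rceil$ new items, each of size $\varepsilon$ and type $t$. $\hat I$ is the instance with $d$ scenarios and item set $\mathcal{L}\cup\bigcup_{t\in\mathcal{T}}\hat{\mathcal{S}}_t$ (items of $\mathcal{L}$ keep their sizes and types). *)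

theory Defs
  imports Complex_Main "HOL-Library.Disjoint_Sets"
begin

definition bpps_instance :: "nat \<Rightarrow> 'a set \<Rightarrow> ('a \<Rightarrow> real) \<Rightarrow> ('a \<Rightarrow> nat set) \<Rightarrow> bool" where
  "bpps_instance d I s K \<longleftrightarrow> finite I \<and> (\<forall>i\<in>I. 0 < s i \<and> s i \<le> 1 \<and> K i \<subseteq> {1..d})"

definition scen :: "('a \<Rightarrow> nat set) \<Rightarrow> 'a set \<Rightarrow> nat \<Rightarrow> 'a set" where
  "scen K I k = {i\<in>I. k \<in> K i}"

definition bpps_feasible :: "nat \<Rightarrow> 'a set \<Rightarrow> ('a \<Rightarrow> real) \<Rightarrow> ('a \<Rightarrow> nat set) \<Rightarrow> 'a set set \<Rightarrow> bool" where
  "bpps_feasible d I s K P \<longleftrightarrow> partition_on I P \<and>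
     (\<forall>B\<in>P. \<forall>k\<in>{1..d}. (\<Sum>i\<in>B \<inter> scen K I k. s i) \<le> 1)"

definition bpps_value :: "nat \<Rightarrow> 'a set \<Rightarrow> ('a \<Rightarrow> nat set) \<Rightarrow> 'a set set \<Rightarrow> nat" where
  "bpps_value d I K P = Max (insert 0 ((\<lambda>k. card {B\<in>P. B \<inter> scen K I k \<noteq> {}}) ` {1..d}))"

definition bpps_opt :: "nat \<Rightarrow> 'a set \<Rightarrow> ('a \<Rightarrow> real) \<Rightarrow> ('a \<Rightarrow> nat set) \<Rightarrow> nat" where
  "bpps_opt d I s K = (LEAST v. \<exists>P. bpps_feasible d I s K P \<and> bpps_value d I K P = v)"

text \<open>The rounded instance \<hat>I. Large items keep their identity (Inl i); for each type t
  the new items of type t and size \<epsilon> are Inr (t, j) with j below the required count.\<close>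
definition small_count :: "'a set \<Rightarrow> ('a \<Rightarrow> real) \<Rightarrow> ('a \<Rightarrow> nat set) \<Rightarrow> real \<Rightarrow> nat set \<Rightarrow> nat" where
  "small_count I s K \<epsilon> t =
     nat \<lceil>(\<Sum>i\<in>{i\<in>I. s i < \<epsilon>\<^sup>2 \<and> K i = t}. s i) / (\<epsilon> - \<epsilon>\<^sup>2)\<rceil>"

definition hat_items :: "'a set \<Rightarrow> ('a \<Rightarrow> real) \<Rightarrow> ('a \<Rightarrow> nat set) \<Rightarrow> real \<Rightarrow> ('a + nat set \<times> nat) set" where
  "hat_items I s K \<epsilon> =
     Inl ` {i\<in>I. \<epsilon>\<^sup>2 \<le> s i} \<union>
     {Inr (t, j) | t j. t \<in> K ` I \<and> j < small_count I s K \<epsilon> t}"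

definition hat_size :: "('a \<Rightarrow> real) \<Rightarrow> real \<Rightarrow> ('a + nat set \<times> nat) \<Rightarrow> real" where
  "hat_size s \<epsilon> x = (case x of Inl i \<Rightarrow> s i | Inr _ \<Rightarrow> \<epsilon>)"

definition hat_type :: "('a \<Rightarrow> nat set) \<Rightarrow> ('a + nat set \<times> nat) \<Rightarrow> nat set" where
  "hat_type K x = (case x of Inl i \<Rightarrow> K i | Inr (t, _) \<Rightarrow> t)"

end

theory Submission
  imports Defs
begin

text \<open>
  Start from an optimal packing of \<open>I\<close>. If the small items of type \<open>t\<close> in a bin have total
  size \<open>a\<close>, the bin can take \<open>\<lfloor>a/\<epsilon>\<rfloor>\<close> new items of type \<open>t\<close> in their place without exceeding
  its capacity in any scenario. With \<open>\<sigma>\<close> the total size of the small items of type \<open>t\<close>, there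
  are at most \<open>\<sigma>/\<epsilon> + 2\<sigma> + 1\<close> new items of type \<open>t\<close>, while the \<open>m \<le> OPT\<close> bins used by a
  scenario \<open>k \<in> t\<close> take at least \<open>\<sigma>/\<epsilon> - m\<close> of them; since \<open>\<sigma> \<le> m\<close>, at most \<open>4 OPT\<close> are
  left over. Over the at most \<open>2^d\<close> nonempty types these are packed \<open>1/\<epsilon>\<close> to a bin, adding at
  most \<open>2^(d+2) \<epsilon> OPT + 1\<close> bins to every scenario, and \<open>4 \<le> 2(d+1)\<close>.
\<close>

lemma exists_disjoint_subsets_with_quota:
  fixes q :: "'b \<Rightarrow> nat" and X :: "'c set"
  assumes "finite P" and "finite X"
  shows "\<exists>h. (\<forall>B\<in>P. h B \<subseteq> X \<and> card (h B) \<le> q B) \<and> disjoint_family_on h P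
           \<and> card (X - \<Union>(h ` P)) \<le> card X - sum q P"
  using assms(1)
proof (induction rule: finite_induct)
  case empty
  show ?case by (rule exI[of _ "\<lambda>_. {}"]) (simp add: disjoint_family_on_def)
next
  case (insert B P)
  then obtain h where sub: "\<forall>B\<in>P. h B \<subseteq> X \<and> card (h B) \<le> q B"
    and disj: "disjoint_family_on h P" and rest: "card (X - \<Union>(h ` P)) \<le> card X - sum q P"
    by blast
  define R where "R = X - \<Union>(h ` P)"
  obtain Y where Y: "Y \<subseteq> R" "card Y = min (q B) (card R)"
    using obtain_subset_with_card_n[of "min (q B) (card R)" R] by auto
  have "finite R" using assms(2) by (simp add: R_def)
  have h_upd: "(h(B := Y)) ` P = h ` P" using insert.hyps(2) by (auto simp: image_def)
  have "X - \<Union>((h(B := Y)) ` insert B P) = R - Y"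
    using h_upd by (auto simp: R_def)
  then have "card (X - \<Union>((h(B := Y)) ` insert B P)) = card (R - Y)" by simp
  also have "\<dots> = card R - card Y"
    using Y(1) \<open>finite R\<close> by (simp add: card_Diff_subset finite_subset)
  also have "\<dots> \<le> card X - sum q (insert B P)"
    using Y(2) rest insert.hyps by (simp add: R_def[symmetric])
  finally show ?case
    using sub disj Y insert.hyps(2)
    by (intro exI[of _ "h(B := Y)"]) (auto simp: disjoint_family_on_def R_def)
qed

lemma exists_partition_blocks_card_le:
  fixes X :: "'c set"
  assumes "finite X" and "0 < M"
  shows "\<exists>C. partition_on X C \<and> (\<forall>c\<in>C. card c \<le> M) \<and> card C * M < card X + M"
  using assms(1)
proof (induction "card X" arbitrary: X rule: less_induct)
  case less
  show ?case
  proof (cases "card X \<le> M")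
    case True
    show ?thesis
    proof (cases "X = {}")
      case True
      then show ?thesis using assms(2) by (intro exI[of _ "{}"]) (simp add: partition_on_empty)
    next
      case False
      then show ?thesis using \<open>card X \<le> M\<close> less.prems
        by (intro exI[of _ "{X}"]) (simp add: partition_on_space card_gt_0_iff)
    qed
  next
    case False
    obtain Y where Y: "Y \<subseteq> X" "card Y = M"
      using obtain_subset_with_card_n[of M X] False by auto
    have "finite Y" "Y \<noteq> {}" using Y less.prems assms(2) finite_subset by auto
    have card_X: "card (X - Y) + M = card X"
      using Y False \<open>finite Y\<close> by (simp add: card_Diff_subset)
    then have "card (X - Y) < card X" using assms(2) by linarith
    then obtain C where C: "partition_on (X - Y) C" "\<forall>c\<in>C. card c \<le> M"
      "card C * M < card (X - Y) + M"
      using less.hyps less.prems by auto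
    have "Y \<notin> C" using C(1) \<open>Y \<noteq> {}\<close> by (auto simp: partition_on_def)
    moreover have "finite C" using C(1) less.prems finite_elements by blast
    moreover have "partition_on X (insert Y C)"
      using C(1) Y \<open>Y \<noteq> {}\<close>
      by (subst partition_on_insert) (auto simp: disjnt_def partition_on_def Diff_Diff_Int Int_absorb1)
    ultimately show ?thesis
      using C(2,3) Y card_X by (intro exI[of _ "insert Y C"]) auto
  qed
qed

lemma ceiling_div_eps_minus_square_le:
  fixes \<sigma> \<epsilon> :: real
  assumes "0 \<le> \<sigma>" and "0 < \<epsilon>" and "\<epsilon> \<le> 1/2"
  shows "real (nat \<lceil>\<sigma> / (\<epsilon> - \<epsilon>\<^sup>2)\<rceil>) \<le> \<sigma> / \<epsilon> + 2 * \<sigma> + 1"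
proof -
  have "\<sigma> / (\<epsilon> - \<epsilon>\<^sup>2) = \<sigma> / \<epsilon> + \<sigma> / (1 - \<epsilon>)"
    using assms by (simp add: power2_eq_square field_simps)
  moreover have "\<sigma> / (1 - \<epsilon>) \<le> 2 * \<sigma>"
  proof -
    have "(2 * \<epsilon>) * \<sigma> \<le> 1 * \<sigma>" using assms by (intro mult_right_mono) auto
    then show ?thesis using assms by (simp add: pos_divide_le_eq algebra_simps)
  qed
  moreover have "0 \<le> \<sigma> / (\<epsilon> - \<epsilon>\<^sup>2)"
    using assms by (simp add: power2_eq_square mult_left_le_one_le)
  ultimately show ?thesis by linarith
qed

abbreviation bins_used :: "('a \<Rightarrow> nat set) \<Rightarrow> 'a set \<Rightarrow> 'a set set \<Rightarrow> nat \<Rightarrow> 'a set set" where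
  "bins_used K I P k \<equiv> {B\<in>P. B \<inter> scen K I k \<noteq> {}}"

lemma card_bins_used_le_bpps_value:
  "k \<in> {1..d} \<Longrightarrow> card (bins_used K I P k) \<le> bpps_value d I K P"
  unfolding bpps_value_def by (rule Max_ge) auto

lemma bpps_value_le:
  fixes b :: real
  assumes "0 \<le> b" and "\<And>k. k \<in> {1..d} \<Longrightarrow> real (card (bins_used K I P k)) \<le> b"
  shows "real (bpps_value d I K P) \<le> b"
proof -
  have "bpps_value d I K P \<in> insert 0 ((\<lambda>k. card (bins_used K I P k)) ` {1..d})"
    unfolding bpps_value_def by (rule Max_in) auto
  then show ?thesis using assms by auto
qed

lemma bpps_value_no_scenarios: "bpps_value 0 I K P = 0"
  by (simp add: bpps_value_def)

lemma bpps_opt_le_value: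
  "bpps_feasible d I s K P \<Longrightarrow> bpps_opt d I s K \<le> bpps_value d I K P"
  unfolding bpps_opt_def by (rule Least_le) blast

lemma bpps_opt_attained:
  assumes "bpps_instance d I s K"
  shows "\<exists>P. bpps_feasible d I s K P \<and> bpps_value d I K P = bpps_opt d I s K"
proof -
  have "sum s ({i} \<inter> scen K I k) \<le> 1" if "i \<in> I" for i k
    using assms that by (cases "i \<in> scen K I k") (auto simp: bpps_instance_def)
  then have "bpps_feasible d I s K ((\<lambda>i. {i}) ` I)"
    unfolding bpps_feasible_def by (auto simp: partition_on_singletons)
  then show ?thesis
    unfolding bpps_opt_def
    by (intro LeastI_ex[where P = "\<lambda>v. \<exists>P. bpps_feasible d I s K P \<and> bpps_value d I K P = v"]) blast
qed

locale small_item_rounding =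
  fixes d :: nat and I :: "'a set" and s :: "'a \<Rightarrow> real" and K :: "'a \<Rightarrow> nat set"
    and \<epsilon> :: real
  assumes is_instance: "bpps_instance d I s K"
    and eps_pos: "0 < \<epsilon>" and eps_le_half: "\<epsilon> \<le> 1/2"
begin

abbreviation "Ihat \<equiv> hat_items I s K \<epsilon>"
abbreviation "shat \<equiv> hat_size s \<epsilon>"
abbreviation "Khat \<equiv> hat_type K"

definition large :: "'a set" where
  "large = {i\<in>I. \<epsilon>\<^sup>2 \<le> s i}"

definition small_of_type :: "nat set \<Rightarrow> 'a set" where
  "small_of_type t = {i\<in>I. s i < \<epsilon>\<^sup>2 \<and> K i = t}"

definition new_items :: "nat set \<Rightarrow> ('a + nat set \<times> nat) set" where
  "new_items t = {Inr (t, j) | j. t \<in> K ` I \<and> j < small_count I s K \<epsilon> t}"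

lemma finite_I: "finite I"
  and size_pos: "i \<in> I \<Longrightarrow> 0 < s i"
  and type_subset: "i \<in> I \<Longrightarrow> K i \<subseteq> {1..d}"
  using is_instance by (auto simp: bpps_instance_def)

lemma size_nonneg: "i \<in> I \<Longrightarrow> 0 \<le> s i"
  using size_pos less_imp_le by blast

lemma hat_items_eq: "Ihat = Inl ` large \<union> (\<Union>t\<in>K ` I. new_items t)"
  unfolding hat_items_def large_def new_items_def by blast

lemma new_items_subset: "new_items t \<subseteq> Ihat"
  by (auto simp: hat_items_eq new_items_def)

lemma new_items_image: "t \<in> K ` I \<Longrightarrow> new_items t = (\<lambda>j. Inr (t, j)) ` {..<small_count I s K \<epsilon> t}"
  unfolding new_items_def by auto

lemma finite_new_items: "finite (new_items t)"
  by (cases "t \<in> K ` I") (auto simp: new_items_image new_items_def)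

lemma card_new_items: "t \<in> K ` I \<Longrightarrow> card (new_items t) = small_count I s K \<epsilon> t"
  by (simp add: new_items_image card_image inj_on_def)

lemma new_items_disjoint: "t \<noteq> t' \<Longrightarrow> new_items t \<inter> new_items t' = {}"
  unfolding new_items_def by auto

lemma Inl_notin_new_items: "Inl i \<notin> new_items t"
  unfolding new_items_def by auto

lemma Khat_new_items: "x \<in> new_items t \<Longrightarrow> Khat x = t"
  unfolding new_items_def hat_type_def by auto

lemma shat_new_items: "x \<in> new_items t \<Longrightarrow> shat x = \<epsilon>"
  unfolding new_items_def hat_size_def by auto

lemma sum_shat_new_items:
  assumes "X \<subseteq> new_items t"
  shows "sum shat X = \<epsilon> * real (card X)"
proof -
  have "sum shat X = sum (\<lambda>_. \<epsilon>) X" using assms shat_new_items by (intro sum.cong) auto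
  then show ?thesis by (simp add: mult.commute)
qed

lemma Khat_Inl [simp]: "Khat (Inl i) = K i"
  and shat_Inl [simp]: "shat (Inl i) = s i"
  by (simp_all add: hat_type_def hat_size_def)

lemma small_count_le:
  "real (small_count I s K \<epsilon> t) \<le> sum s (small_of_type t) / \<epsilon> + 2 * sum s (small_of_type t) + 1"
proof -
  have "0 \<le> sum s (small_of_type t)"
    by (rule sum_nonneg) (auto simp: small_of_type_def size_nonneg)
  then show ?thesis
    using ceiling_div_eps_minus_square_le eps_pos eps_le_half
    by (simp add: small_count_def small_of_type_def)
qed

end

locale rounding_of_solution = small_item_rounding +
  fixes P :: "'a set set" and M :: nat
  assumes feasible: "bpps_feasible d I s K P" and eps_M: "\<epsilon> * real M = 1"
begin

lemma partition_P: "partition_on I P"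
  and bin_capacity: "B \<in> P \<Longrightarrow> k \<in> {1..d} \<Longrightarrow> sum s (B \<inter> scen K I k) \<le> 1"
  using feasible by (auto simp: bpps_feasible_def)

lemma finite_P: "finite P"
  using partition_P finite_I finite_elements by blast

lemma bin_subset: "B \<in> P \<Longrightarrow> B \<subseteq> I"
  using partition_P by (auto simp: partition_on_def)

lemma finite_bin: "B \<in> P \<Longrightarrow> finite B"
  using bin_subset finite_I finite_subset by blast

lemma bins_disjoint: "B \<in> P \<Longrightarrow> B' \<in> P \<Longrightarrow> B \<noteq> B' \<Longrightarrow> B \<inter> B' = {}"
  using partition_P by (auto simp: partition_on_def disjoint_def)

lemma bin_cover: "i \<in> I \<Longrightarrow> \<exists>B\<in>P. i \<in> B"
  using partition_P by (auto simp: partition_on_def)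

definition nonempty_types :: "nat set set" where
  "nonempty_types = K ` I - {{}}"

definition small_load :: "'a set \<Rightarrow> nat set \<Rightarrow> real" where
  "small_load B t = sum s (B \<inter> small_of_type t)"

definition quota :: "nat set \<Rightarrow> 'a set \<Rightarrow> nat" where
  "quota t B = nat \<lfloor>small_load B t / \<epsilon>\<rfloor>"

definition assigned :: "nat set \<Rightarrow> 'a set \<Rightarrow> ('a + nat set \<times> nat) set" where
  "assigned t = (SOME h. (\<forall>B\<in>P. h B \<subseteq> new_items t \<and> card (h B) \<le> quota t B)
     \<and> disjoint_family_on h P \<and> card (new_items t - \<Union>(h ` P)) \<le> card (new_items t) - sum (quota t) P)"

definition unassigned :: "nat set \<Rightarrow> ('a + nat set \<times> nat) set" where
  "unassigned t = new_items t - \<Union>(assigned t ` P)"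

definition leftover :: "('a + nat set \<times> nat) set" where
  "leftover = (\<Union>t\<in>nonempty_types. unassigned t)"

definition leftover_bins :: "('a + nat set \<times> nat) set set" where
  "leftover_bins = (SOME C. partition_on leftover C \<and> (\<forall>c\<in>C. card c \<le> M) \<and> card C * M < card leftover + M)"

definition rounded_bin :: "'a set \<Rightarrow> ('a + nat set \<times> nat) set" where
  "rounded_bin B = Inl ` (B \<inter> large) \<union> (\<Union>t\<in>nonempty_types. assigned t B)"

text \<open>New items of the empty type belong to no scenario, so one extra bin holding all of them
  is never counted.\<close>

definition rounded_solution :: "('a + nat set \<times> nat) set set" where
  "rounded_solution = (rounded_bin ` P \<union> leftover_bins \<union> {new_items {}}) - {{}}"

lemma assigned_subset: "B \<in> P \<Longrightarrow> assigned t B \<subseteq> new_items t"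
  and card_assigned_le: "B \<in> P \<Longrightarrow> card (assigned t B) \<le> quota t B"
  and disjoint_family_assigned: "disjoint_family_on (assigned t) P"
  and card_unassigned_le_quota: "card (unassigned t) \<le> card (new_items t) - sum (quota t) P"
  using someI_ex[OF exists_disjoint_subsets_with_quota[where q = "quota t", OF finite_P finite_new_items[of t]]]
  unfolding assigned_def[symmetric] unassigned_def by blast+

lemma Inl_notin_assigned: "B \<in> P \<Longrightarrow> Inl i \<notin> assigned t B"
  using assigned_subset Inl_notin_new_items by blast

lemma Khat_assigned: "B \<in> P \<Longrightarrow> x \<in> assigned t B \<Longrightarrow> Khat x = t"
  using assigned_subset Khat_new_items by blast

lemma finite_leftover: "finite leftover"
  using finite_I finite_new_items by (simp add: leftover_def nonempty_types_def unassigned_def)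

lemma shat_leftover: "x \<in> leftover \<Longrightarrow> shat x = \<epsilon>"
  using shat_new_items by (auto simp: leftover_def unassigned_def)

lemma partition_leftover_bins: "partition_on leftover leftover_bins"
  and card_leftover_bin_le: "c \<in> leftover_bins \<Longrightarrow> card c \<le> M"
  and card_leftover_bins: "card leftover_bins * M < card leftover + M"
proof -
  have "0 < M"
    using eps_M by (rule contrapos_pp) simp
  with finite_leftover have "partition_on leftover leftover_bins \<and> (\<forall>c\<in>leftover_bins. card c \<le> M)
      \<and> card leftover_bins * M < card leftover + M"
    unfolding leftover_bins_def by (intro someI_ex[OF exists_partition_blocks_card_le])
  then show "partition_on leftover leftover_bins" "c \<in> leftover_bins \<Longrightarrow> card c \<le> M"
    "card leftover_bins * M < card leftover + M"
    by auto
qed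

lemma assigned_subset_rounded_bin: "t \<in> nonempty_types \<Longrightarrow> assigned t B \<subseteq> rounded_bin B"
  by (auto simp: rounded_bin_def)

lemma unassigned_subset_leftover: "t \<in> nonempty_types \<Longrightarrow> unassigned t \<subseteq> leftover"
  by (auto simp: leftover_def)

lemma hat_items_decomposition:
  "Ihat = (\<Union>B\<in>P. rounded_bin B) \<union> leftover \<union> new_items {}"
proof
  show "(\<Union>B\<in>P. rounded_bin B) \<union> leftover \<union> new_items {} \<subseteq> Ihat"
  proof -
    have "Inl ` large \<subseteq> Ihat" by (simp add: hat_items_eq)
    then have "rounded_bin B \<subseteq> Ihat" if "B \<in> P" for B
      using that assigned_subset new_items_subset unfolding rounded_bin_def by blast
    moreover have "leftover \<subseteq> Ihat"
      using new_items_subset unfolding leftover_def unassigned_def by blast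
    ultimately show ?thesis using new_items_subset by blast
  qed
  show "Ihat \<subseteq> (\<Union>B\<in>P. rounded_bin B) \<union> leftover \<union> new_items {}"
  proof
    fix x assume "x \<in> Ihat"
    then consider i where "x = Inl i" "i \<in> large" | t where "t \<in> K ` I" "x \<in> new_items t"
      by (auto simp: hat_items_eq)
    then show "x \<in> (\<Union>B\<in>P. rounded_bin B) \<union> leftover \<union> new_items {}"
    proof cases
      case 1
      then obtain B where "B \<in> P" "i \<in> B" using bin_cover by (auto simp: large_def)
      then show ?thesis using 1 by (auto simp: rounded_bin_def)
    next
      case 2
      show ?thesis
      proof (cases "t = {}")
        case True
        then show ?thesis using 2 by simp
      next
        case False
        then have t: "t \<in> nonempty_types" using 2 by (simp add: nonempty_types_def)
        have "x \<in> (\<Union>B\<in>P. assigned t B) \<or> x \<in> unassigned t"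
          using 2 by (auto simp: unassigned_def)
        then show ?thesis
          using assigned_subset_rounded_bin[OF t] unassigned_subset_leftover[OF t] by blast
      qed
    qed
  qed
qed

lemma rounded_bins_disjoint: "disjoint_family_on rounded_bin P"
  unfolding disjoint_family_on_def
proof (intro ballI impI equalityI subsetI)
  fix B B' x assume B: "B \<in> P" "B' \<in> P" "B \<noteq> B'" and x: "x \<in> rounded_bin B \<inter> rounded_bin B'"
  show "x \<in> {}"
  proof (cases x)
    case (Inl i)
    then show ?thesis
      using x bins_disjoint[OF B] Inl_notin_assigned B by (auto simp: rounded_bin_def)
  next
    case (Inr p)
    then obtain t t' where "x \<in> assigned t B" "x \<in> assigned t' B'"
      using x by (auto simp: rounded_bin_def)
    moreover from this have "t = t'" using Khat_assigned B by metis
    ultimately show ?thesis using disjoint_family_assigned B by (auto simp: disjoint_family_on_def)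
  qed
qed simp

lemma rounded_bin_disjoint_leftover:
  assumes "B \<in> P"
  shows "rounded_bin B \<inter> leftover = {}"
proof (intro equalityI subsetI)
  fix x assume x: "x \<in> rounded_bin B \<inter> leftover"
  then obtain t where t: "x \<in> new_items t" "\<forall>B'\<in>P. x \<notin> assigned t B'"
    by (auto simp: leftover_def unassigned_def)
  then obtain t' where "x \<in> assigned t' B"
    using x Inl_notin_new_items by (auto simp: rounded_bin_def)
  moreover from this have "t' = t" using Khat_assigned Khat_new_items t(1) assms by metis
  ultimately show "x \<in> {}" using t(2) assms by blast
qed simp

lemma new_items_nonempty_type_disjoint: "t \<in> nonempty_types \<Longrightarrow> new_items t \<inter> new_items {} = {}"
  using new_items_disjoint by (auto simp: nonempty_types_def)

lemma rounded_bin_disjoint_new_items_empty: "B \<in> P \<Longrightarrow> rounded_bin B \<inter> new_items {} = {}"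
  using new_items_nonempty_type_disjoint assigned_subset Inl_notin_new_items
  by (fastforce simp: rounded_bin_def)

lemma leftover_disjoint_new_items_empty: "leftover \<inter> new_items {} = {}"
  using new_items_nonempty_type_disjoint by (auto simp: leftover_def unassigned_def)

lemma Union_leftover_bins: "\<Union>leftover_bins = leftover"
  using partition_leftover_bins by (simp add: partition_on_def)

lemma partition_rounded_solution: "partition_on Ihat rounded_solution"
proof (rule partition_onI)
  have "\<Union>(X - {{}}) = \<Union>X" for X :: "('a + nat set \<times> nat) set set" by blast
  then have "\<Union>rounded_solution = (\<Union>B\<in>P. rounded_bin B) \<union> leftover \<union> new_items {}"
    by (simp add: rounded_solution_def Union_leftover_bins Un_ac)
  then show "\<Union>rounded_solution = Ihat" using hat_items_decomposition by simp
next
  have "disjoint (rounded_bin ` P \<union> leftover_bins \<union> {new_items {}})"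
  proof (intro disjoint_union)
    show "disjoint (rounded_bin ` P)"
      using rounded_bins_disjoint by (rule disjoint_family_on_disjoint_image)
    show "disjoint leftover_bins" using partition_leftover_bins by (rule partition_onD2)
    show "\<Union>(rounded_bin ` P) \<inter> \<Union>leftover_bins = {}"
      using rounded_bin_disjoint_leftover Union_leftover_bins by blast
    show "\<Union>(rounded_bin ` P \<union> leftover_bins) \<inter> \<Union>{new_items {}} = {}"
      using rounded_bin_disjoint_new_items_empty leftover_disjoint_new_items_empty Union_leftover_bins
      by blast
  qed simp
  then show "\<And>p q. p \<in> rounded_solution \<Longrightarrow> q \<in> rounded_solution \<Longrightarrow> p \<noteq> q \<Longrightarrow> disjnt p q"
    unfolding rounded_solution_def by (meson DiffD1 pairwiseD)
qed (simp add: rounded_solution_def)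

lemma small_load_nonneg: "0 \<le> small_load B t"
  unfolding small_load_def by (rule sum_nonneg) (auto simp: small_of_type_def size_nonneg)

lemma eps_quota_le: "\<epsilon> * real (quota t B) \<le> small_load B t"
  and quota_ge: "small_load B t / \<epsilon> - 1 \<le> real (quota t B)"
proof -
  have quota_eq: "real (quota t B) = of_int \<lfloor>small_load B t / \<epsilon>\<rfloor>"
    using small_load_nonneg eps_pos by (simp add: quota_def)
  have "\<epsilon> * real (quota t B) \<le> \<epsilon> * (small_load B t / \<epsilon>)"
    unfolding quota_eq using eps_pos by (intro mult_left_mono of_int_floor_le) auto
  then show "\<epsilon> * real (quota t B) \<le> small_load B t"
    using eps_pos by simp
  show "small_load B t / \<epsilon> - 1 \<le> real (quota t B)"
    using quota_eq by linarith
qed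

lemma sum_shat_assigned_le:
  assumes "B \<in> P"
  shows "sum shat (assigned t B) \<le> small_load B t"
proof -
  have "sum shat (assigned t B) = \<epsilon> * real (card (assigned t B))"
    using assigned_subset[OF assms] by (rule sum_shat_new_items)
  also have "\<dots> \<le> \<epsilon> * real (quota t B)"
    using card_assigned_le[OF assms] eps_pos by simp
  also have "\<dots> \<le> small_load B t" by (rule eps_quota_le)
  finally show ?thesis .
qed

lemma rounded_bin_scen:
  assumes "B \<in> P"
  shows "rounded_bin B \<inter> scen Khat Ihat k
    = Inl ` {i\<in>B \<inter> large. k \<in> K i} \<union> (\<Union>t\<in>{t\<in>nonempty_types. k \<in> t}. assigned t B)"
  using assms Khat_assigned assigned_subset[OF assms] new_items_subset bin_subset[OF assms]
  by (fastforce simp: rounded_bin_def scen_def hat_items_eq large_def)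

lemma sum_small_load_scenario:
  assumes "B \<in> P"
  shows "(\<Sum>t\<in>{t\<in>nonempty_types. k \<in> t}. small_load B t) = sum s {i\<in>B. s i < \<epsilon>\<^sup>2 \<and> k \<in> K i}"
proof -
  let ?S = "{i\<in>B. s i < \<epsilon>\<^sup>2 \<and> k \<in> K i}"
  have "small_load B t = sum s {i\<in>?S. K i = t}" if "k \<in> t" for t
    using that bin_subset[OF assms] by (auto simp: small_load_def small_of_type_def intro!: sum.cong)
  then have "(\<Sum>t\<in>{t\<in>nonempty_types. k \<in> t}. small_load B t) = (\<Sum>t\<in>{t\<in>nonempty_types. k \<in> t}. sum s {i\<in>?S. K i = t})"
    by simp
  also have "\<dots> = sum s ?S"
    using finite_bin[OF assms] finite_I bin_subset[OF assms]
    by (intro sum.group) (auto simp: nonempty_types_def)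
  finally show ?thesis .
qed

lemma rounded_bin_load_le:
  assumes "B \<in> P"
  shows "sum shat (rounded_bin B \<inter> scen Khat Ihat k) \<le> sum s (B \<inter> scen K I k)"
proof -
  let ?A = "{i\<in>B \<inter> large. k \<in> K i}" and ?T = "{t\<in>nonempty_types. k \<in> t}"
  have fin: "finite ?A" "finite ?T" "\<And>t. finite (assigned t B)"
    using finite_bin[OF assms] finite_I finite_subset[OF assigned_subset[OF assms] finite_new_items]
    by (auto simp: nonempty_types_def)
  have "sum shat (rounded_bin B \<inter> scen Khat Ihat k) = sum s ?A + sum shat (\<Union>t\<in>?T. assigned t B)"
    using fin Inl_notin_assigned[OF assms]
    by (subst rounded_bin_scen[OF assms], subst sum.union_disjoint) (auto simp: sum.reindex)
  also have "sum shat (\<Union>t\<in>?T. assigned t B) = (\<Sum>t\<in>?T. sum shat (assigned t B))"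
    using fin assigned_subset[OF assms] new_items_disjoint by (intro sum.UNION_disjoint) blast+
  also have "\<dots> \<le> (\<Sum>t\<in>?T. small_load B t)"
    using sum_shat_assigned_le[OF assms] by (rule sum_mono)
  also have "\<dots> = sum s {i\<in>B. s i < \<epsilon>\<^sup>2 \<and> k \<in> K i}"
    by (rule sum_small_load_scenario[OF assms])
  also have "sum s ?A + \<dots> = sum s (B \<inter> scen K I k)"
    using finite_bin[OF assms] bin_subset[OF assms]
    by (subst sum.union_disjoint[symmetric]) (auto simp: large_def scen_def intro!: sum.cong)
  finally show ?thesis by simp
qed

lemma leftover_bin_load_le:
  assumes "c \<in> leftover_bins"
  shows "sum shat (c \<inter> scen Khat Ihat k) \<le> 1"
proof -
  have c: "c \<subseteq> leftover" using assms Union_leftover_bins by blast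
  then have "finite c" using finite_leftover finite_subset by blast
  have "sum shat (c \<inter> scen Khat Ihat k) \<le> sum shat c"
    using \<open>finite c\<close> c shat_leftover eps_pos by (intro sum_mono2) auto
  also have "\<dots> = \<epsilon> * real (card c)"
    using c shat_leftover by (simp add: subset_eq)
  also have "\<dots> \<le> \<epsilon> * real M"
    using card_leftover_bin_le[OF assms] eps_pos by simp
  finally show ?thesis using eps_M by simp
qed

lemma scen_new_items_empty: "new_items {} \<inter> scen Khat Ihat k = {}"
  using Khat_new_items by (auto simp: scen_def)

lemma rounded_solution_cases:
  assumes "p \<in> rounded_solution"
  obtains (bin) B where "B \<in> P" "p = rounded_bin B" | (leftover) "p \<in> leftover_bins"
    | (empty_type) "p = new_items {}"
  using assms by (auto simp: rounded_solution_def)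

lemma feasible_rounded_solution: "bpps_feasible d Ihat shat Khat rounded_solution"
  unfolding bpps_feasible_def
proof (intro conjI ballI partition_rounded_solution)
  fix p k assume p: "p \<in> rounded_solution" and k: "k \<in> {1..d}"
  from p show "sum shat (p \<inter> scen Khat Ihat k) \<le> 1"
  proof (cases rule: rounded_solution_cases)
    case (bin B)
    then show ?thesis
      using rounded_bin_load_le bin_capacity k order_trans by blast
  qed (simp_all add: leftover_bin_load_le scen_new_items_empty)
qed

lemma small_of_type_subset_scen: "k \<in> t \<Longrightarrow> small_of_type t \<subseteq> scen K I k"
  by (auto simp: small_of_type_def scen_def)

lemma assigned_nonempty_imp_small_items:
  assumes "B \<in> P" and "assigned t B \<noteq> {}"
  shows "B \<inter> small_of_type t \<noteq> {}"
proof
  assume "B \<inter> small_of_type t = {}"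
  then have "small_load B t = 0" by (simp add: small_load_def)
  then have "quota t B = 0"
    using eps_quota_le[of t B] eps_pos by (simp add: mult_le_0_iff)
  moreover have "finite (assigned t B)"
    using assigned_subset[OF assms(1)] finite_new_items finite_subset by blast
  ultimately show False
    using assms card_assigned_le[OF assms(1), of t] by auto
qed

lemma rounded_bin_meets_scen:
  assumes "B \<in> P" and "rounded_bin B \<inter> scen Khat Ihat k \<noteq> {}"
  shows "B \<inter> scen K I k \<noteq> {}"
proof -
  consider i where "i \<in> B" "k \<in> K i" | t where "k \<in> t" "assigned t B \<noteq> {}"
    using assms rounded_bin_scen[OF assms(1), of k] by auto
  then show ?thesis
  proof cases
    case 1
    then show ?thesis using bin_subset[OF assms(1)] by (auto simp: scen_def)
  next
    case 2
    then show ?thesis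
      using assigned_nonempty_imp_small_items[OF assms(1)] small_of_type_subset_scen by blast
  qed
qed

lemma bins_used_rounded_solution:
  "bins_used Khat Ihat rounded_solution k \<subseteq> rounded_bin ` bins_used K I P k \<union> leftover_bins"
proof
  fix p assume "p \<in> bins_used Khat Ihat rounded_solution k"
  then have p: "p \<in> rounded_solution" and meets: "p \<inter> scen Khat Ihat k \<noteq> {}" by auto
  from p show "p \<in> rounded_bin ` bins_used K I P k \<union> leftover_bins"
  proof (cases rule: rounded_solution_cases)
    case (bin B)
    then have "B \<in> bins_used K I P k" using meets rounded_bin_meets_scen by blast
    then show ?thesis using bin by blast
  next
    case leftover
    then show ?thesis by blast
  next
    case empty_type
    then show ?thesis using meets scen_new_items_empty by blast
  qed
qed

lemma card_bins_used_rounded_solution: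
  "card (bins_used Khat Ihat rounded_solution k) \<le> card (bins_used K I P k) + card leftover_bins"
proof -
  have "finite leftover_bins"
    using finite_leftover partition_leftover_bins finite_elements by blast
  then have "card (bins_used Khat Ihat rounded_solution k) \<le> card (rounded_bin ` bins_used K I P k \<union> leftover_bins)"
    using finite_P by (intro card_mono bins_used_rounded_solution) auto
  also have "\<dots> \<le> card (rounded_bin ` bins_used K I P k) + card leftover_bins"
    by (rule card_Un_le)
  also have "\<dots> \<le> card (bins_used K I P k) + card leftover_bins"
    using finite_P by (simp add: card_image_le)
  finally show ?thesis .
qed

lemma sum_small_load: "(\<Sum>B\<in>P. small_load B t) = sum s (small_of_type t)"
proof -
  let ?g = "\<lambda>i. if i \<in> small_of_type t then s i else 0"
  have "(\<Sum>B\<in>P. small_load B t) = (\<Sum>B\<in>P. sum ?g B)"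
    unfolding small_load_def using finite_bin by (intro sum.cong refl sum.inter_restrict)
  also have "\<dots> = sum ?g I"
    by (rule sum.partition[OF finite_I partition_P, symmetric])
  also have "\<dots> = sum s (I \<inter> small_of_type t)"
    by (rule sum.inter_restrict[OF finite_I, symmetric])
  also have "I \<inter> small_of_type t = small_of_type t"
    by (auto simp: small_of_type_def)
  finally show ?thesis .
qed

lemma sum_small_load_bins_used:
  assumes "k \<in> t"
  shows "(\<Sum>B\<in>bins_used K I P k. small_load B t) = sum s (small_of_type t)"
proof -
  have "small_load B t = 0" if "B \<in> P - bins_used K I P k" for B
    using that small_of_type_subset_scen[OF assms] by (auto simp: small_load_def intro: sum.neutral)
  then have "(\<Sum>B\<in>bins_used K I P k. small_load B t) = (\<Sum>B\<in>P. small_load B t)"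
    using finite_P by (intro sum.mono_neutral_left) auto
  then show ?thesis by (simp add: sum_small_load)
qed

lemma small_load_le_one:
  assumes "B \<in> P" and "k \<in> t" and "k \<in> {1..d}"
  shows "small_load B t \<le> 1"
proof -
  have "small_load B t \<le> sum s (B \<inter> scen K I k)"
    unfolding small_load_def using finite_bin[OF assms(1)] small_of_type_subset_scen[OF assms(2)]
    by (intro sum_mono2) (auto simp: scen_def size_nonneg)
  also have "\<dots> \<le> 1" using bin_capacity[OF assms(1,3)] .
  finally show ?thesis .
qed

lemma sum_small_of_type_le_card_bins_used:
  assumes "k \<in> t" and "k \<in> {1..d}"
  shows "sum s (small_of_type t) \<le> card (bins_used K I P k)"
proof -
  have "sum s (small_of_type t) = (\<Sum>B\<in>bins_used K I P k. small_load B t)"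
    using sum_small_load_bins_used[OF assms(1)] by simp
  also have "\<dots> \<le> (\<Sum>B\<in>bins_used K I P k. 1)"
    using small_load_le_one assms by (intro sum_mono) auto
  finally show ?thesis by simp
qed

lemma sum_quota_ge:
  assumes "k \<in> t"
  shows "sum s (small_of_type t) / \<epsilon> - card (bins_used K I P k) \<le> real (sum (quota t) P)"
proof -
  have "sum s (small_of_type t) / \<epsilon> - card (bins_used K I P k)
      = (\<Sum>B\<in>bins_used K I P k. small_load B t / \<epsilon> - 1)"
    by (simp add: sum_small_load_bins_used[OF assms, symmetric] sum_subtractf sum_divide_distrib)
  also have "\<dots> \<le> (\<Sum>B\<in>bins_used K I P k. real (quota t B))"
    by (intro sum_mono quota_ge)
  also have "\<dots> \<le> real (sum (quota t) P)"
    using finite_P by (simp add: sum_mono2)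
  finally show ?thesis .
qed

lemma card_unassigned_le_value:
  assumes "t \<in> nonempty_types"
  shows "real (card (unassigned t)) \<le> 4 * real (bpps_value d I K P)"
proof -
  obtain i k where i: "i \<in> I" "K i = t" and "k \<in> t"
    using assms by (auto simp: nonempty_types_def)
  then have k: "k \<in> {1..d}" using type_subset by blast
  obtain B where "B \<in> P" "i \<in> B" using bin_cover i(1) by blast
  then have "B \<in> bins_used K I P k" using i \<open>k \<in> t\<close> by (auto simp: scen_def)
  then have "1 \<le> card (bins_used K I P k)" using finite_P by (auto simp: Suc_le_eq card_gt_0_iff)
  moreover have "real (card (unassigned t)) + real (sum (quota t) P) \<le> real (card (new_items t))
      \<or> card (unassigned t) = 0"
  proof -
    have "card (unassigned t) + sum (quota t) P \<le> card (new_items t) \<or> card (unassigned t) = 0"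
      using card_unassigned_le_quota[of t] by arith
    then show ?thesis by (simp only: of_nat_add[symmetric] of_nat_le_iff)
  qed
  moreover have "real (card (new_items t)) \<le> sum s (small_of_type t) / \<epsilon> + 2 * sum s (small_of_type t) + 1"
    using card_new_items small_count_le i by auto
  moreover have "card (bins_used K I P k) \<le> bpps_value d I K P"
    using card_bins_used_le_bpps_value[OF k] .
  ultimately show ?thesis
    using sum_quota_ge[OF \<open>k \<in> t\<close>] sum_small_of_type_le_card_bins_used[OF \<open>k \<in> t\<close> k] by linarith
qed

lemma card_nonempty_types_le: "card nonempty_types \<le> 2 ^ d"
proof -
  have "nonempty_types \<subseteq> Pow {1..d}"
    using type_subset by (auto simp: nonempty_types_def)
  then have "card nonempty_types \<le> card (Pow {1..d})" by (intro card_mono) auto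
  then show ?thesis by (simp add: card_Pow)
qed

lemma card_leftover_le: "real (card leftover) \<le> 2 ^ (d + 2) * real (bpps_value d I K P)"
proof -
  have "finite nonempty_types" using finite_I by (simp add: nonempty_types_def)
  have "real (card leftover) \<le> (\<Sum>t\<in>nonempty_types. real (card (unassigned t)))"
    unfolding leftover_def of_nat_sum[symmetric] of_nat_le_iff
    using \<open>finite nonempty_types\<close> by (rule card_UN_le)
  also have "\<dots> \<le> real (card nonempty_types) * (4 * real (bpps_value d I K P))"
    by (rule sum_bounded_above) (rule card_unassigned_le_value)
  also have "\<dots> \<le> 2 ^ d * (4 * real (bpps_value d I K P))"
    using card_nonempty_types_le by (intro mult_right_mono) simp_all
  finally show ?thesis by (simp add: power_add)
qed

lemma card_leftover_bins_le: "real (card leftover_bins) \<le> \<epsilon> * real (card leftover) + 1"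
proof -
  have "real (card leftover_bins) * real M \<le> real (card leftover) + real M"
    using card_leftover_bins by (simp flip: of_nat_mult of_nat_add)
  then have "\<epsilon> * (real (card leftover_bins) * real M) \<le> \<epsilon> * (real (card leftover) + real M)"
    using eps_pos by (intro mult_left_mono) auto
  then have "real (card leftover_bins) * (\<epsilon> * real M) \<le> \<epsilon> * real (card leftover) + \<epsilon> * real M"
    by (simp add: algebra_simps)
  then show ?thesis using eps_M by simp
qed

theorem rounded_solution_value_le:
  "real (bpps_value d Ihat Khat rounded_solution)
     \<le> (1 + 2 ^ (d + 2) * \<epsilon>) * real (bpps_value d I K P) + 1"
proof (rule bpps_value_le)
  show "0 \<le> (1 + 2 ^ (d + 2) * \<epsilon>) * real (bpps_value d I K P) + 1"
    using eps_pos by simp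
  fix k assume k: "k \<in> {1..d}"
  have "real (card (bins_used Khat Ihat rounded_solution k))
      \<le> real (card (bins_used K I P k)) + real (card leftover_bins)"
    using card_bins_used_rounded_solution by (simp flip: of_nat_add)
  also have "\<dots> \<le> real (bpps_value d I K P) + (\<epsilon> * (2 ^ (d + 2) * real (bpps_value d I K P)) + 1)"
  proof -
    have "\<epsilon> * real (card leftover) \<le> \<epsilon> * (2 ^ (d + 2) * real (bpps_value d I K P))"
      using card_leftover_le eps_pos by (intro mult_left_mono) auto
    moreover have "real (card (bins_used K I P k)) \<le> real (bpps_value d I K P)"
      using card_bins_used_le_bpps_value[OF k] by simp
    ultimately show ?thesis using card_leftover_bins_le by linarith
  qed
  finally show "real (card (bins_used Khat Ihat rounded_solution k))
      \<le> (1 + 2 ^ (d + 2) * \<epsilon>) * real (bpps_value d I K P) + 1"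
    by (simp add: algebra_simps)
qed

end

theorem lemma8:
  fixes d :: nat and I :: "'a set" and s :: "'a \<Rightarrow> real" and K :: "'a \<Rightarrow> nat set"
    and \<epsilon> :: real
  assumes "bpps_instance d I s K"
    and "0 < \<epsilon>" and "\<epsilon> \<le> 1/4" and "\<exists>m::nat. 1 / \<epsilon> = real m"
  shows "real (bpps_opt d (hat_items I s K \<epsilon>) (hat_size s \<epsilon>) (hat_type K))
         \<le> (1 + 2 ^ (d + 1) * real (d + 1) * \<epsilon>) * real (bpps_opt d I s K) + 1"
proof -
  obtain M :: nat where M: "1 / \<epsilon> = real M" using assms(4) by blast
  obtain P where P: "bpps_feasible d I s K P" "bpps_value d I K P = bpps_opt d I s K"
    using bpps_opt_attained[OF assms(1)] by blast
  interpret rounding_of_solution d I s K \<epsilon> P M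
    using assms M P by unfold_locales (auto simp: field_simps)
  have "bpps_opt d Ihat shat Khat \<le> bpps_value d Ihat Khat rounded_solution"
    using feasible_rounded_solution by (rule bpps_opt_le_value)
  then have "real (bpps_opt d Ihat shat Khat) \<le> (1 + 2 ^ (d + 2) * \<epsilon>) * real (bpps_opt d I s K) + 1"
    using rounded_solution_value_le P(2) by simp
  also have "\<dots> \<le> (1 + 2 ^ (d + 1) * real (d + 1) * \<epsilon>) * real (bpps_opt d I s K) + 1"
  proof (cases "d = 0")
    case True
    then have "bpps_opt d I s K = 0" using P(2) bpps_value_no_scenarios by metis
    then show ?thesis by simp
  next
    case False
    then have "(2::real) ^ (d + 2) \<le> 2 ^ (d + 1) * real (d + 1)" by simp
    then show ?thesis using assms(2) by (intro add_right_mono mult_right_mono) auto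
  qed
  finally show ?thesis .
qed

end
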